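(* Let $n\ge 1$ and, for a real symmetric $n\times n$ matrix $X$ with eigenvalues $\lambda_1(X)\le\cdots\le\lambda_n(X)$, set $F(X):=\sum_{i=1}^n\arctan(\lambda_i(X))$. For each $k\in\{0,1,\dots,n\}$ define $v_k\in C(\mathbb{R}^n)$ by \[v_k(x):=\frac14-\sum_{i=1}^{k}|x_i|+\sum_{i=k+1}^{n}\frac12|x_i|^{3/2},\] define $u_k(x):=-v_{n-k}(Jx)$, where $J$ is the $n\times n$ exchange matrix (the permutation matrix with ones on the anti-diagonal, so $(Jx)_i=x_{n+1-i}$), and let $f_k\in C(\mathbb{R}^n)$ be the continuous extension to all of $\mathbb{R}^n$ of \[f_k(x):=-\sum_{i=1}^{k}\arctan\!\Big(\tfrac38|x_i|^{-1/2}\Big)+\sum_{i=k+1}^{n}\arctan\!\Big(\tfrac38|x_i|^{-1/2}\Big),\qquad x_i\neq0 \text{ for all } i\] (so that $f_k(0)=(n-2k)\frac{\pi}{2}$). Then $v_k$ is a viscosity subsolution and $u_k$ is a viscosity supersolution of the equation \[\sum_{i=1}^n\arctan\big(\lambda_i(D^2 w)\big)=f_k(x)\qquad\text{in }\mathbb{R}^n.\]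
   Context: $D^2 w$ denotes the Hessian matrix of $w$. For continuous $f$ and continuous $w$ on an open set $\Omega\subseteq\mathbb{R}^n$: $w$ is a viscosity subsolution of $F(D^2w)=f(x)$ in $\Omega$ if for every $x^*\in\Omega$ and every $C^2$ function $\phi$ with $\phi\ge w$ near $x^*$ and $\phi(x^* )=w(x^* )$ one has $F(D^2\phi(x^* ))\ge f(x^* )$; $w$ is a viscosity supersolution if for every $x^*\in\Omega$ and every $C^2$ function $\psi$ with $\psi\le w$ near $x^*$ and $\psi(x^* )=w(x^* )$ one has $F(D^2\psi(x^* ))\le f(x^* )$. *)

theory Defs
  imports "HOL-Analysis.Analysis" "HOL-Computational_Algebra.Polynomial"
    "HOL-Library.Multiset"
begin

text \<open>Coordinates of real^'n are indexed by a finite well-ordered type 'n of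
  cardinality n; idx i in {0..n-1} is the position of i (so coordinate x_(idx i + 1)
  of the paper is x $ i).\<close>

definition idx :: "'n::{finite,wellorder} \<Rightarrow> nat" where
  "idx i = card {j. j < i}"

text \<open>Characteristic polynomial det(tI - X) and the eigenvalues of X listed
  increasingly with multiplicity; the i-th eigenvalue (paper: lambda_(i+1)) is
  eigs X ! i.\<close>

definition charpoly :: "real^'n^'n \<Rightarrow> real poly" where
  "charpoly X = det (\<chi> i j. (if i = j then [:0, 1:] else 0) - [:X $ i $ j:])"

definition eigs :: "real^'n^'n \<Rightarrow> real list" where
  "eigs X = sorted_list_of_multiset (proots (charpoly X))"

definition Farctan :: "real^'n^'n \<Rightarrow> real" where
  "Farctan X = (\<Sum>i<CARD('n). arctan (eigs X ! i))"

definition C2_with_hessian :: "(real^'n \<Rightarrow> real) \<Rightarrow> (real^'n \<Rightarrow> real^'n^'n) \<Rightarrow> bool" where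
  "C2_with_hessian \<phi> H \<longleftrightarrow> (\<exists>g. (\<forall>x. (\<phi> has_derivative (\<lambda>h. g x \<bullet> h)) (at x)) \<and>
      (\<forall>x. (g has_derivative (\<lambda>h. H x *v h)) (at x)) \<and> continuous_on UNIV H)"

definition viscosity_subsolution ::
  "(real^'n^'n \<Rightarrow> real) \<Rightarrow> (real^'n \<Rightarrow> real) \<Rightarrow> (real^'n) set \<Rightarrow> (real^'n \<Rightarrow> real) \<Rightarrow> bool" where
  "viscosity_subsolution F f \<Omega> w \<longleftrightarrow>
     (\<forall>x\<in>\<Omega>. \<forall>\<phi> H. C2_with_hessian \<phi> H \<and> eventually (\<lambda>y. \<phi> y \<ge> w y) (nhds x)
        \<and> \<phi> x = w x \<longrightarrow> F (H x) \<ge> f x)"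

definition viscosity_supersolution ::
  "(real^'n^'n \<Rightarrow> real) \<Rightarrow> (real^'n \<Rightarrow> real) \<Rightarrow> (real^'n) set \<Rightarrow> (real^'n \<Rightarrow> real) \<Rightarrow> bool" where
  "viscosity_supersolution F f \<Omega> w \<longleftrightarrow>
     (\<forall>x\<in>\<Omega>. \<forall>\<psi> H. C2_with_hessian \<psi> H \<and> eventually (\<lambda>y. \<psi> y \<le> w y) (nhds x)
        \<and> \<psi> x = w x \<longrightarrow> F (H x) \<le> f x)"

definition vfun :: "nat \<Rightarrow> real^'n::{finite,wellorder} \<Rightarrow> real" where
  "vfun k x = 1/4 - (\<Sum>i\<in>{i. idx i < k}. \<bar>x $ i\<bar>)
              + (\<Sum>i\<in>{i. k \<le> idx i}. (1/2) * \<bar>x $ i\<bar> powr (3/2))"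

definition exchange :: "((real, 'n::{finite,wellorder}) vec, 'n) vec" where
  "exchange = (\<chi> i j. if idx i + idx j = card (UNIV :: 'n set) - 1 then 1 else 0)"

definition ufun :: "nat \<Rightarrow> real^'n::{finite,wellorder} \<Rightarrow> real" where
  "ufun k x = - vfun (card (UNIV :: 'n set) - k) (exchange *v x)"

end

theory Submission
  imports Defs "HOL-Real_Asymp.Real_Asymp"
begin

text \<open>If a C^2 function touches v_k from above at x, its Hessian H (symmetric by Schwarz)
  dominates the second difference quotients of v_k at x. These split over the coordinates: the
  cusp |s|^(3/2)/2 cannot be touched at s = 0 and has curvature d(s) = 3/8 |s|^(-1/2) elsewhere,
  while the kink -|s| has curvature 0 away from 0. Hence h \<bullet> H h \<ge> \<Sum> d_i h_i^2 for all h
  vanishing on the set S of kink coordinates with x_i = 0 (d_i = 0 for the other kinks), and a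
  Courant-Fischer counting argument gives F(H) \<ge> \<Sum>_(i \<notin> S) arctan d_i - |S| \<pi>/2. By continuity
  f_k(x) is the same sum except that every kink coordinate contributes
  -arctan (3/8 |x_i|^(-1/2)) \<le> 0, and -\<pi>/2 if it lies in S; so F(H) \<ge> f_k(x).
  For u_k: -u_k is v_k with kinks and cusps exchanged, it is a subsolution for -f_k, and F is odd
  on symmetric matrices.\<close>

section \<open>Spectral theorem for real symmetric matrices\<close>

lemma symmetric_matrix_inner:
  fixes M :: "real^'n^'n"
  assumes "transpose M = M"
  shows "(M *v x) \<bullet> y = x \<bullet> (M *v y)"
  by (metis assms dot_lmul_matrix transpose_matrix_vector)

lemma matrix_vector_mult_uminus_left: "(- M) *v x = - (M *v x)"
  for M :: "real^'n^'m"
  by (simp add: vec_eq_iff matrix_vector_mult_def sum_negf)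

definition orthonormal_eigenvectors :: "real^'n^'n \<Rightarrow> (real^'n) set \<Rightarrow> bool" where
  "orthonormal_eigenvectors M E \<longleftrightarrow>
     pairwise orthogonal E \<and> (\<forall>u\<in>E. norm u = 1 \<and> (\<exists>l. M *v u = l *\<^sub>R u))"

lemma orthonormal_eigenvectors_subset:
  "orthonormal_eigenvectors M E \<Longrightarrow> E' \<subseteq> E \<Longrightarrow> orthonormal_eigenvectors M E'"
  unfolding orthonormal_eigenvectors_def pairwise_def by blast

lemma orthonormal_eigenvectors_inner:
  assumes "orthonormal_eigenvectors M E" "u \<in> E" "v \<in> E"
  shows "u \<bullet> v = (if u = v then 1 else 0)"
  using assms unfolding orthonormal_eigenvectors_def pairwise_def orthogonal_def
  by (metis norm_eq_1)

lemma orthonormal_eigenvectors_eigenvalue: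
  assumes "orthonormal_eigenvectors M E" "u \<in> E"
  shows "M *v u = (u \<bullet> (M *v u)) *\<^sub>R u"
proof -
  obtain l where "M *v u = l *\<^sub>R u" using assms unfolding orthonormal_eigenvectors_def by blast
  moreover have "u \<bullet> u = 1" using orthonormal_eigenvectors_inner[OF assms assms(2)] by simp
  ultimately show ?thesis by simp
qed

lemma orthonormal_eigenvectors_independent:
  "orthonormal_eigenvectors M E \<Longrightarrow> independent E"
  unfolding orthonormal_eigenvectors_def
  by (metis norm_zero pairwise_orthogonal_independent zero_neq_one)

lemma orthonormal_eigenvectors_card:
  fixes M :: "real^'n^'n"
  assumes "orthonormal_eigenvectors M E"
  shows "finite E" "card E \<le> CARD('n)"
  using independent_bound[OF orthonormal_eigenvectors_independent[OF assms]] by simp_all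

lemma linear_coeff_eq_0_if_nonpos:
  fixes a b :: real
  assumes "\<And>t. t * a + t\<^sup>2 * b \<le> 0"
  shows "a = 0"
proof (rule ccontr)
  assume "a \<noteq> 0"
  define c where "c = \<bar>b\<bar> + 1"
  have "c > 0" "c + b > 0" by (auto simp: c_def)
  have "(a / c) * a + (a / c)\<^sup>2 * b = a\<^sup>2 * (c + b) / c\<^sup>2"
    using \<open>c > 0\<close> by (simp add: field_simps power2_eq_square)
  also have "\<dots> > 0" using \<open>a \<noteq> 0\<close> \<open>c > 0\<close> \<open>c + b > 0\<close> by simp
  finally show False using assms[of "a / c"] by linarith
qed

lemma rayleigh_quotient_attains_max:
  fixes M :: "real^'n^'n"
  assumes V: "subspace V" "V \<noteq> {0}"
  obtains u where "u \<in> V" "u \<bullet> u = 1" "\<And>y. y \<in> V \<Longrightarrow> y \<bullet> (M *v y) \<le> (u \<bullet> (M *v u)) * (y \<bullet> y)"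
proof -
  let ?S = "V \<inter> sphere 0 1"
  have "compact ?S" by (simp add: V closed_subspace closed_Int_compact)
  obtain v where "v \<in> V" "v \<noteq> 0" using V subspace_0 by blast
  then have "v /\<^sub>R norm v \<in> ?S" using V by (simp add: subspace_scale)
  then have "?S \<noteq> {}" by blast
  moreover have "continuous_on ?S (\<lambda>y. y \<bullet> (M *v y))"
    by (intro continuous_on_inner continuous_on_id matrix_vector_mult_linear_continuous_on)
  ultimately obtain u where u: "u \<in> ?S"
    and u_max: "\<And>y. y \<in> ?S \<Longrightarrow> y \<bullet> (M *v y) \<le> u \<bullet> (M *v u)"
    using continuous_attains_sup[OF \<open>compact ?S\<close>] by blast
  have "y \<bullet> (M *v y) \<le> (u \<bullet> (M *v u)) * (y \<bullet> y)" if "y \<in> V" for y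
  proof (cases "y = 0")
    case False
    have "y /\<^sub>R norm y \<in> ?S" using that False V by (simp add: subspace_scale)
    from u_max[OF this] have "(y \<bullet> (M *v y)) / (norm y)\<^sup>2 \<le> u \<bullet> (M *v u)"
      by (simp add: matrix_vector_mult_scaleR power2_eq_square divide_inverse mult_ac)
    then show ?thesis using False by (simp add: divide_le_eq power2_norm_eq_inner)
  qed simp
  moreover have "u \<in> V" "u \<bullet> u = 1" using u by (auto simp: norm_eq_1)
  ultimately show ?thesis using that by blast
qed

text \<open>For symmetric M, a maximiser of the Rayleigh quotient on an invariant subspace is an
  eigenvector: the first variation of the quotient in every direction of the subspace vanishes.\<close>

lemma symmetric_matrix_eigenvector_in_invariant_subspace:
  fixes M :: "real^'n^'n"
  assumes sym: "transpose M = M" and V: "subspace V" "V \<noteq> {0}"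
    and inv: "\<And>x. x \<in> V \<Longrightarrow> M *v x \<in> V"
  shows "\<exists>u\<in>V. norm u = 1 \<and> (\<exists>l. M *v u = l *\<^sub>R u)"
proof -
  obtain u where "u \<in> V" "u \<bullet> u = 1"
    and rayleigh: "\<And>y. y \<in> V \<Longrightarrow> y \<bullet> (M *v y) \<le> (u \<bullet> (M *v u)) * (y \<bullet> y)"
    using rayleigh_quotient_attains_max[OF V] by blast
  define m where "m = u \<bullet> (M *v u)"
  have first_variation: "w \<bullet> (M *v u - m *\<^sub>R u) = 0" if "w \<in> V" for w
  proof (rule linear_coeff_eq_0_if_nonpos)
    fix t :: real
    have "u + t *\<^sub>R w \<in> V" using \<open>u \<in> V\<close> \<open>w \<in> V\<close> V by (simp add: subspace_add subspace_scale)
    from rayleigh[OF this] have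
      "m + 2 * t * (w \<bullet> (M *v u)) + t\<^sup>2 * (w \<bullet> (M *v w))
         \<le> m * (1 + 2 * t * (w \<bullet> u) + t\<^sup>2 * (w \<bullet> w))" (is "?l \<le> ?r")
      using symmetric_matrix_inner[OF sym, of w u] \<open>u \<bullet> u = 1\<close>
      by (simp add: m_def inner_commute power2_eq_square algebra_simps)
    have "t * (w \<bullet> (M *v u - m *\<^sub>R u)) + t\<^sup>2 * ((w \<bullet> (M *v w) - m * (w \<bullet> w)) / 2)
        = (?l - ?r) / 2"
      by (simp add: inner_diff_right field_simps)
    also have "\<dots> \<le> 0" using \<open>?l \<le> ?r\<close> by simp
    finally show "t * (w \<bullet> (M *v u - m *\<^sub>R u)) + t\<^sup>2 * ((w \<bullet> (M *v w) - m * (w \<bullet> w)) / 2) \<le> 0" .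
  qed
  have "M *v u - m *\<^sub>R u \<in> V"
    using inv[OF \<open>u \<in> V\<close>] \<open>u \<in> V\<close> V by (simp add: subspace_diff subspace_scale)
  from first_variation[OF this] have "M *v u = m *\<^sub>R u" by simp
  then show ?thesis using \<open>u \<in> V\<close> \<open>u \<bullet> u = 1\<close> by (auto simp: norm_eq_1)
qed

lemma orthonormal_eigenvectors_extend:
  fixes M :: "real^'n^'n"
  assumes sym: "transpose M = M" and E: "orthonormal_eigenvectors M E" and "card E < CARD('n)"
  shows "\<exists>u. u \<notin> E \<and> orthonormal_eigenvectors M (insert u E)"
proof -
  define V where "V = {y. \<forall>x\<in>E. orthogonal x y}"
  have "subspace V" unfolding V_def by (rule subspace_orthogonal_to_vectors)
  have inv: "M *v x \<in> V" if "x \<in> V" for x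
    using that E orthonormal_eigenvectors_eigenvalue[OF E] symmetric_matrix_inner[OF sym]
    by (simp add: V_def orthogonal_def) (metis inner_scaleR_left mult_zero_right)
  have "dim E < DIM(real^'n)"
    using assms dim_eq_card_independent[OF orthonormal_eigenvectors_independent[OF E]] by simp
  then obtain x where "x \<noteq> 0" "\<And>y. y \<in> span E \<Longrightarrow> orthogonal x y"
    using orthogonal_to_subspace_exists by blast
  then have "x \<in> V" "x \<noteq> 0" using span_base by (auto simp: V_def orthogonal_commute)
  then obtain u where u: "u \<in> V" "norm u = 1" "\<exists>l. M *v u = l *\<^sub>R u"
    using symmetric_matrix_eigenvector_in_invariant_subspace[OF sym \<open>subspace V\<close> _ inv] by blast
  have "u \<notin> E" using u by (auto simp: V_def orthogonal_def dest: norm_eq_1[THEN iffD1])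
  moreover have "orthonormal_eigenvectors M (insert u E)"
    using E u unfolding orthonormal_eigenvectors_def pairwise_insert V_def
    by (auto simp: orthogonal_commute)
  ultimately show ?thesis by blast
qed

theorem symmetric_matrix_orthonormal_eigenbasis:
  fixes M :: "real^'n^'n"
  assumes "transpose M = M"
  shows "\<exists>E. orthonormal_eigenvectors M E \<and> card E = CARD('n)"
proof -
  have "\<exists>E. orthonormal_eigenvectors M E \<and> card E = m" if "m \<le> CARD('n)" for m
    using that
  proof (induction m)
    case 0
    have "orthonormal_eigenvectors M {}" by (simp add: orthonormal_eigenvectors_def)
    then show ?case by auto
  next
    case (Suc m)
    then obtain E where E: "orthonormal_eigenvectors M E" "card E = m" by auto
    with orthonormal_eigenvectors_extend[OF assms E(1)] Suc.prems obtain u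
      where "u \<notin> E" "orthonormal_eigenvectors M (insert u E)" by auto
    then show ?case using E orthonormal_eigenvectors_card[OF E(1)] by (intro exI[of _ "insert u E"]) simp
  qed
  then show ?thesis by simp
qed

section \<open>A lower bound for the sum of arctangents of the eigenvalues\<close>

lemma poly_charpoly: "poly (charpoly M) t = det (mat t - M)"
proof -
  have "poly (charpoly M) t = det (\<chi> i j. poly ((if i = j then [:0, 1:] else 0) - [:M $ i $ j:]) t)"
    unfolding charpoly_def det_def by (simp add: poly_sum poly_prod)
  also have "\<dots> = det (mat t - M)" by (intro arg_cong[where f = det]) (simp add: vec_eq_iff mat_def)
  finally show ?thesis .
qed

lemma det_mat_minus_eq_prod_eigenvalues:
  fixes M :: "real^'n^'n"
  assumes E: "orthonormal_eigenvectors M E" and card_E: "card E = CARD('n)"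
  shows "det (mat t - M) = (\<Prod>u\<in>E. t - u \<bullet> (M *v u))"
proof -
  have "finite E" using orthonormal_eigenvectors_card[OF E] by simp
  then have "\<exists>\<sigma>. bij_betw \<sigma> (UNIV :: 'n set) E"
    using card_E by (intro finite_same_card_bij) auto
  then obtain \<sigma> where \<sigma>: "bij_betw \<sigma> (UNIV :: 'n set) E" ..
  define Q :: "real^'n^'n" where "Q = (\<chi> i j. \<sigma> j $ i)"
  define D :: "real^'n^'n" where "D = (\<chi> i j. if i = j then t - \<sigma> i \<bullet> (M *v \<sigma> i) else 0)"
  have \<sigma>_E: "\<sigma> i \<in> E" for i using \<sigma> by (auto simp: bij_betw_def)
  have column_Q: "column j Q = \<sigma> j" for j by (simp add: column_def Q_def vec_eq_iff)
  have "orthogonal_matrix Q"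
    unfolding orthogonal_matrix_orthonormal_columns column_Q orthogonal_def
    using orthonormal_eigenvectors_inner[OF E \<sigma>_E \<sigma>_E] \<sigma>
    by (auto simp: norm_eq_1 bij_betw_def inj_on_def)
  then have "det Q \<noteq> 0" using det_orthogonal_matrix by fastforce
  have mat_t: "mat t *v x = t *\<^sub>R x" for x :: "real^'n"
    by (simp add: vec_eq_iff matrix_vector_mult_def mat_def if_distrib[where f = "\<lambda>a. a * b" for b]
        cong: if_cong)
  have "column j ((mat t - M) ** Q) = column j (Q ** D)" for j
  proof -
    have "column j ((mat t - M) ** Q) = (mat t - M) *v \<sigma> j"
      by (simp add: column_def matrix_matrix_mult_def matrix_vector_mult_def Q_def vec_eq_iff)
    also have "\<dots> = (t - \<sigma> j \<bullet> (M *v \<sigma> j)) *\<^sub>R \<sigma> j"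
      using orthonormal_eigenvectors_eigenvalue[OF E \<sigma>_E]
      by (simp add: mat_t algebra_simps)
    also have "\<dots> = column j (Q ** D)"
      by (simp add: column_def matrix_matrix_mult_def D_def Q_def vec_eq_iff if_distrib mult.commute
          cong: if_cong)
    finally show ?thesis .
  qed
  then have "(mat t - M) ** Q = Q ** D" by (simp add: column_def vec_eq_iff)
  then have "det (mat t - M) = det D"
    using \<open>det Q \<noteq> 0\<close> by (metis det_mul mult.commute mult_cancel_left)
  also have "\<dots> = (\<Prod>i\<in>UNIV. t - \<sigma> i \<bullet> (M *v \<sigma> i))" by (simp add: D_def det_diagonal)
  also have "\<dots> = (\<Prod>u\<in>E. t - u \<bullet> (M *v u))" using prod.reindex_bij_betw[OF \<sigma>] by simp
  finally show ?thesis .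
qed

lemma Farctan_eq_sum_eigenvalues:
  fixes M :: "real^'n^'n"
  assumes E: "orthonormal_eigenvectors M E" and card_E: "card E = CARD('n)"
  shows "Farctan M = (\<Sum>u\<in>E. arctan (u \<bullet> (M *v u)))"
proof -
  have "finite E" using orthonormal_eigenvectors_card[OF E] by simp
  define L where "L = (\<Sum>u\<in>E. {#u \<bullet> (M *v u)#})"
  have "charpoly M = (\<Prod>u\<in>E. [:- (u \<bullet> (M *v u)), 1:])"
    by (intro poly_eq_poly_eq_iff[THEN iffD1] ext)
       (simp add: poly_charpoly det_mat_minus_eq_prod_eigenvalues[OF E card_E] poly_prod)
  then have roots: "proots (charpoly M) = L" by (simp add: proots_prod L_def)
  have "size L = CARD('n)"
    using \<open>finite E\<close> card_E unfolding L_def by (induction E rule: finite_induct) auto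
  then have "length (eigs M) = CARD('n)"
    by (metis eigs_def roots mset_sorted_list_of_multiset size_mset)
  then have "Farctan M = sum_list (map arctan (eigs M))"
    by (simp add: Farctan_def sum_list_sum_nth atLeast0LessThan)
  also have "\<dots> = sum_mset (image_mset arctan L)"
    by (metis eigs_def roots mset_map mset_sorted_list_of_multiset sum_mset_sum_list)
  also have "\<dots> = (\<Sum>u\<in>E. arctan (u \<bullet> (M *v u)))"
    using \<open>finite E\<close> unfolding L_def by (induction E rule: finite_induct) auto
  finally show ?thesis .
qed

lemma Farctan_uminus:
  fixes M :: "real^'n^'n"
  assumes "transpose M = M"
  shows "Farctan (- M) = - Farctan M"
proof -
  obtain E where E: "orthonormal_eigenvectors M E" and card_E: "card E = CARD('n)"
    using symmetric_matrix_orthonormal_eigenbasis[OF assms] by blast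
  have "orthonormal_eigenvectors (- M) E"
    using E unfolding orthonormal_eigenvectors_def matrix_vector_mult_uminus_left
    by (metis scaleR_minus_left)
  then show ?thesis
    by (simp add: Farctan_eq_sum_eigenvalues[OF _ card_E] Farctan_eq_sum_eigenvalues[OF E card_E]
        matrix_vector_mult_uminus_left arctan_minus sum_negf)
qed

lemma quadratic_form_less_on_span_eigenvectors:
  fixes M :: "real^'n^'n"
  assumes E: "orthonormal_eigenvectors M E" and less: "\<And>u. u \<in> E \<Longrightarrow> u \<bullet> (M *v u) < c"
    and h: "h \<in> span E" "h \<noteq> 0"
  shows "h \<bullet> (M *v h) < c * (h \<bullet> h)"
proof -
  define lam where "lam u = u \<bullet> (M *v u)" for u
  have eig: "M *v u = lam u *\<^sub>R u" if "u \<in> E" for u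
    using orthonormal_eigenvectors_eigenvalue[OF E that] by (simp add: lam_def)
  have "finite E" using orthonormal_eigenvectors_card[OF E] by simp
  then obtain a where a: "h = (\<Sum>u\<in>E. a u *\<^sub>R u)" using h(1) span_finite by blast
  have inner_h: "h \<bullet> v = a v" if "v \<in> E" for v
  proof -
    have "h \<bullet> v = (\<Sum>u\<in>E. if u = v then a u else 0)"
      unfolding a inner_sum_left
      by (intro sum.cong) (simp_all add: orthonormal_eigenvectors_inner[OF E _ that])
    then show ?thesis using \<open>finite E\<close> that by simp
  qed
  have Mh: "M *v h = (\<Sum>u\<in>E. (a u * lam u) *\<^sub>R u)"
    unfolding a linear_sum[OF matrix_vector_mul_linear]
    by (intro sum.cong) (simp_all add: matrix_vector_mult_scaleR eig)
  have quad: "h \<bullet> (M *v h) = (\<Sum>u\<in>E. (a u)\<^sup>2 * lam u)"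
    unfolding Mh inner_sum_right
    by (intro sum.cong) (simp_all add: inner_h power2_eq_square)
  have norm: "h \<bullet> h = (\<Sum>u\<in>E. (a u)\<^sup>2)"
    by (subst (2) a, unfold inner_sum_right) (intro sum.cong, simp_all add: inner_h power2_eq_square)
  have "\<exists>u\<in>E. a u \<noteq> 0" using h(2) a by (metis (no_types, lifting) scale_eq_0_iff sum.neutral)
  then obtain u0 where "u0 \<in> E" "a u0 \<noteq> 0" ..
  then have "0 < (\<Sum>u\<in>E. (a u)\<^sup>2 * (c - lam u))"
    using \<open>finite E\<close> less by (intro sum_pos2[of _ u0]) (auto simp: lam_def less_imp_le)
  also have "\<dots> = c * (h \<bullet> h) - h \<bullet> (M *v h)"
    by (simp add: quad norm sum_subtractf sum_distrib_left algebra_simps)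
  finally show ?thesis by simp
qed

lemma exists_nonzero_in_Int_subspaces:
  fixes U W :: "(real^'n) set"
  assumes "subspace U" "subspace W" "CARD('n) < dim U + dim W"
  shows "\<exists>h\<in>U \<inter> W. h \<noteq> 0"
proof -
  have "dim {x + y |x y. x \<in> U \<and> y \<in> W} + dim (U \<inter> W) = dim U + dim W"
    using assms by (intro dim_sums_Int)
  moreover have "dim {x + y |x y. x \<in> U \<and> y \<in> W} \<le> CARD('n)" by (rule dim_subset_UNIV_cart)
  ultimately have "dim (U \<inter> W) \<noteq> 0" using assms(3) by linarith
  then have "\<not> U \<inter> W \<subseteq> {0}" by simp
  then show ?thesis by blast
qed

text \<open>If the inequality failed, the eigenvectors with eigenvalue < c and the coordinate vectors e_i
  with i \<notin> S and c \<le> d i would span subspaces meeting in some h \<noteq> 0 (dimension count). For this h,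
  quad gives h \<bullet> H h \<ge> c |h|^2, while the eigenvector expansion gives h \<bullet> H h < c |h|^2.\<close>

lemma card_le_card_eigenvalues_ge:
  fixes H :: "real^'n^'n" and S :: "'n set" and d :: "'n \<Rightarrow> real"
  assumes E: "orthonormal_eigenvectors H E" and card_E: "card E = CARD('n)"
    and quad: "\<And>h. \<forall>i\<in>S. h $ i = 0 \<Longrightarrow> (\<Sum>i\<in>-S. d i * (h $ i)\<^sup>2) \<le> h \<bullet> (H *v h)"
  shows "card {i\<in>-S. c \<le> d i} \<le> card {u\<in>E. c \<le> u \<bullet> (H *v u)}"
proof (rule ccontr)
  assume contra: "\<not> ?thesis"
  define J where "J = {i\<in>-S. c \<le> d i}"
  define E1 where "E1 = {u\<in>E. u \<bullet> (H *v u) < c}"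
  define W where "W = {h :: real^'n. \<forall>i. i \<notin> J \<longrightarrow> h $ i = 0}"
  have "finite E" using orthonormal_eigenvectors_card[OF E] by simp
  have E1: "orthonormal_eigenvectors H E1"
    using orthonormal_eigenvectors_subset[OF E] by (auto simp: E1_def)
  have "card E = card E1 + card {u\<in>E. c \<le> u \<bullet> (H *v u)}"
    using \<open>finite E\<close> unfolding E1_def
    by (subst card_Un_disjoint[symmetric]) (auto intro: arg_cong[where f = card])
  moreover have "dim (span E1) = card E1"
    using orthonormal_eigenvectors_independent[OF E1] by (simp add: dim_eq_card_independent)
  moreover have "dim W = card J" using dim_substandard_cart[where 'a = real, of J] by (simp only: W_def dim_vec_eq)
  moreover have "card {u\<in>E. c \<le> u \<bullet> (H *v u)} < card J"
    using contra unfolding J_def by linarith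
  ultimately have "CARD('n) < dim (span E1) + dim W" using card_E by linarith
  moreover have "subspace W" by (auto simp: subspace_def W_def)
  ultimately obtain h where h: "h \<in> span E1" "h \<in> W" "h \<noteq> 0"
    using exists_nonzero_in_Int_subspaces[of "span E1" W] by auto
  have "c * (h \<bullet> h) = (\<Sum>i\<in>UNIV. c * (h $ i)\<^sup>2)"
    by (simp add: inner_vec_def sum_distrib_left power2_eq_square)
  also have "\<dots> = (\<Sum>i\<in>-S. c * (h $ i)\<^sup>2)"
    using h(2) by (intro sum.mono_neutral_right) (auto simp: W_def J_def)
  also have "\<dots> \<le> (\<Sum>i\<in>-S. d i * (h $ i)\<^sup>2)"
  proof (rule sum_mono)
    fix i assume "i \<in> -S"
    show "c * (h $ i)\<^sup>2 \<le> d i * (h $ i)\<^sup>2"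
    proof (cases "c \<le> d i")
      case False
      then have "h $ i = 0" using h(2) \<open>i \<in> -S\<close> by (simp add: W_def J_def)
      then show ?thesis by simp
    qed (simp add: mult_right_mono)
  qed
  also have "\<dots> \<le> h \<bullet> (H *v h)" using h(2) by (intro quad) (auto simp: W_def J_def)
  finally show False
    using quadratic_form_less_on_span_eigenvectors[OF E1 _ h(1,3), of c] by (auto simp: E1_def)
qed

text \<open>Induction on M, pairing its largest element with an element of L above it.\<close>

lemma sum_mset_image_le_if_counts_le:
  fixes g :: "real \<Rightarrow> real" and M L :: "real multiset"
  assumes mono: "mono g" and lower: "\<And>x. b \<le> g x"
    and counts: "\<And>c. size (filter_mset ((\<le>) c) M) \<le> size (filter_mset ((\<le>) c) L)"
  shows "sum_mset (image_mset g M) + (real (size L) - real (size M)) * b \<le> sum_mset (image_mset g L)"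
  using counts
proof (induction M arbitrary: L rule: multiset_induct_max)
  case empty
  then show ?case using sum_mset_mono[of L "\<lambda>_. b" g] lower by simp
next
  case (add m M)
  have "0 < size (filter_mset ((\<le>) m) L)" using add.prems[of m] by simp
  then obtain l where "l \<in># filter_mset ((\<le>) m) L" by (metis multiset_nonemptyE size_empty less_irrefl)
  then have "l \<in># L" "m \<le> l" by simp_all
  define L' where "L' = L - {#l#}"
  have L: "L = add_mset l L'" using \<open>l \<in># L\<close> by (simp add: L'_def)
  have "size (filter_mset ((\<le>) c) M) \<le> size (filter_mset ((\<le>) c) L')" for c
  proof (cases "c \<le> m")
    case True
    then show ?thesis using add.prems[of c] \<open>m \<le> l\<close> by (simp add: L)
  next
    case False
    then have "filter_mset ((\<le>) c) M = {#}" using add.hyps by (auto simp: filter_mset_eq_conv)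
    then show ?thesis by (metis le0 size_empty)
  qed
  then have "sum_mset (image_mset g M) + (real (size L') - real (size M)) * b \<le> sum_mset (image_mset g L')"
    by (rule add.IH)
  moreover have "g m \<le> g l" using mono \<open>m \<le> l\<close> by (rule monoD)
  ultimately show ?case by (simp add: L algebra_simps)
qed

theorem Farctan_lower_bound:
  fixes H :: "real^'n^'n" and S :: "'n set" and d :: "'n \<Rightarrow> real"
  assumes sym: "transpose H = H"
    and quad: "\<And>h. \<forall>i\<in>S. h $ i = 0 \<Longrightarrow> (\<Sum>i\<in>-S. d i * (h $ i)\<^sup>2) \<le> h \<bullet> (H *v h)"
  shows "(\<Sum>i\<in>-S. arctan (d i)) - real (card S) * (pi / 2) \<le> Farctan H"
proof -
  obtain E where E: "orthonormal_eigenvectors H E" and card_E: "card E = CARD('n)"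
    using symmetric_matrix_orthonormal_eigenbasis[OF sym] by blast
  have "finite E" using orthonormal_eigenvectors_card[OF E] by simp
  define L where "L = image_mset (\<lambda>u. u \<bullet> (H *v u)) (mset_set E)"
  define D where "D = image_mset d (mset_set (-S))"
  have counts: "size (filter_mset ((\<le>) c) D) \<le> size (filter_mset ((\<le>) c) L)" for c
    using card_le_card_eigenvalues_ge[OF E card_E quad, of c] \<open>finite E\<close>
    by (simp add: L_def D_def filter_mset_image_mset)
  have "mono arctan" by (simp add: mono_def arctan_monotone')
  moreover have "- (pi / 2) \<le> arctan x" for x using arctan_lbound[of x] by simp
  ultimately have "sum_mset (image_mset arctan D) + (real (size L) - real (size D)) * (- (pi / 2))
      \<le> sum_mset (image_mset arctan L)"
    using counts by (rule sum_mset_image_le_if_counts_le)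
  moreover have "real (size L) - real (size D) = real (card S)"
  proof -
    have "card (-S) = CARD('n) - card S" "card S \<le> CARD('n)"
      using card_Diff_subset[of S UNIV] by (simp_all add: Compl_eq_Diff_UNIV card_mono)
    then show ?thesis using card_E by (simp add: L_def D_def)
  qed
  moreover have "sum_mset (image_mset arctan D) = (\<Sum>i\<in>-S. arctan (d i))"
    by (simp add: D_def sum_unfold_sum_mset image_mset.compositionality comp_def)
  moreover have "sum_mset (image_mset arctan L) = Farctan H"
    by (simp add: L_def Farctan_eq_sum_eigenvalues[OF E card_E] sum_unfold_sum_mset
        image_mset.compositionality comp_def)
  ultimately show ?thesis by simp
qed

section \<open>Second difference quotients and test functions\<close>

lemma has_real_derivative_along_line:
  fixes \<phi> :: "real^'n \<Rightarrow> real"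
  assumes "(\<phi> has_derivative (\<lambda>h. g \<bullet> h)) (at (p + s *\<^sub>R a))"
  shows "((\<lambda>s. \<phi> (p + s *\<^sub>R a)) has_real_derivative g \<bullet> a) (at s)"
proof -
  have "((\<lambda>s. p + s *\<^sub>R a) has_derivative (\<lambda>h. h *\<^sub>R a)) (at s)"
    by (auto intro!: derivative_eq_intros)
  from has_derivative_compose[OF this assms] show ?thesis
    unfolding has_field_derivative_def by (rule has_derivative_eq_rhs) (simp add: fun_eq_iff mult.commute)
qed

lemma has_real_derivative_gradient_along_line:
  fixes g :: "real^'n \<Rightarrow> real^'n"
  assumes "(g has_derivative (\<lambda>h. H *v h)) (at (p + s *\<^sub>R b))"
  shows "((\<lambda>s. g (p + s *\<^sub>R b) \<bullet> a) has_real_derivative (H *v b) \<bullet> a) (at s)"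
proof -
  have "((\<lambda>s. p + s *\<^sub>R b) has_derivative (\<lambda>h. h *\<^sub>R b)) (at s)"
    by (auto intro!: derivative_eq_intros)
  from has_derivative_inner_left[OF has_derivative_compose[OF this assms]] show ?thesis
    unfolding has_field_derivative_def
    by (rule has_derivative_eq_rhs) (simp add: fun_eq_iff matrix_vector_mult_scaleR mult.commute)
qed

lemma mixed_second_difference_mean_value:
  fixes \<phi> :: "real^'n \<Rightarrow> real"
  assumes d1: "\<And>y. (\<phi> has_derivative (\<lambda>h. g y \<bullet> h)) (at y)"
    and d2: "\<And>y. (g has_derivative (\<lambda>h. H y *v h)) (at y)" and "t > 0"
  shows "\<exists>y. norm (y - p) \<le> t * (norm a + norm b) \<and>
     \<phi> (p + t *\<^sub>R a + t *\<^sub>R b) - \<phi> (p + t *\<^sub>R a) - \<phi> (p + t *\<^sub>R b) + \<phi> p = t\<^sup>2 * ((H y *v b) \<bullet> a)"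
proof -
  define D where "D s = \<phi> ((p + t *\<^sub>R b) + s *\<^sub>R a) - \<phi> (p + s *\<^sub>R a)" for s
  have dD: "(D has_real_derivative (g ((p + t *\<^sub>R b) + s *\<^sub>R a) \<bullet> a - g (p + s *\<^sub>R a) \<bullet> a)) (at s)" for s
    unfolding D_def by (intro DERIV_diff has_real_derivative_along_line d1)
  obtain \<xi> where \<xi>: "0 < \<xi>" "\<xi> < t"
    "D t - D 0 = t * (g ((p + t *\<^sub>R b) + \<xi> *\<^sub>R a) \<bullet> a - g (p + \<xi> *\<^sub>R a) \<bullet> a)"
    using MVT2[OF \<open>t > 0\<close> dD] by auto
  define G where "G s = g ((p + \<xi> *\<^sub>R a) + s *\<^sub>R b) \<bullet> a" for s
  have dG: "(G has_real_derivative (H ((p + \<xi> *\<^sub>R a) + s *\<^sub>R b) *v b) \<bullet> a) (at s)" for s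
    unfolding G_def by (intro has_real_derivative_gradient_along_line d2)
  obtain \<eta> where \<eta>: "0 < \<eta>" "\<eta> < t" "G t - G 0 = t * ((H ((p + \<xi> *\<^sub>R a) + \<eta> *\<^sub>R b) *v b) \<bullet> a)"
    using MVT2[OF \<open>t > 0\<close> dG] by auto
  define y where "y = (p + \<xi> *\<^sub>R a) + \<eta> *\<^sub>R b"
  have "norm (y - p) \<le> \<xi> * norm a + \<eta> * norm b"
    using \<xi> \<eta> norm_triangle_ineq[of "\<xi> *\<^sub>R a" "\<eta> *\<^sub>R b"] by (simp add: y_def)
  also have "\<dots> \<le> t * (norm a + norm b)"
    using \<xi> \<eta> by (simp add: distrib_left add_mono mult_right_mono)
  finally have "norm (y - p) \<le> t * (norm a + norm b)" .
  moreover have "\<phi> (p + t *\<^sub>R a + t *\<^sub>R b) - \<phi> (p + t *\<^sub>R a) - \<phi> (p + t *\<^sub>R b) + \<phi> p = t * (G t - G 0)"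
    using \<xi>(3) by (simp add: D_def G_def algebra_simps)
  ultimately show ?thesis using \<eta>(3) by (intro exI[of _ y]) (simp add: y_def power2_eq_square)
qed

lemma tendsto_matrix_vector_mult_inner:
  fixes M :: "'a \<Rightarrow> real^'n^'m"
  assumes "(M \<longlongrightarrow> M0) F"
  shows "((\<lambda>t. (M t *v b) \<bullet> a) \<longlongrightarrow> (M0 *v b) \<bullet> a) F"
  unfolding matrix_vector_mult_def inner_vec_def
  by (intro tendsto_intros tendsto_vec_nth assms)

lemma C2_mixed_second_difference_tendsto:
  assumes "C2_with_hessian \<phi> H" and p: "(p \<longlongrightarrow> x) (at_right 0)"
  shows "((\<lambda>t. (\<phi> (p t + t *\<^sub>R a + t *\<^sub>R b) - \<phi> (p t + t *\<^sub>R a) - \<phi> (p t + t *\<^sub>R b) + \<phi> (p t)) / t\<^sup>2)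
           \<longlongrightarrow> (H x *v b) \<bullet> a) (at_right 0)"
proof -
  obtain g where d1: "\<And>y. (\<phi> has_derivative (\<lambda>h. g y \<bullet> h)) (at y)"
    and d2: "\<And>y. (g has_derivative (\<lambda>h. H y *v h)) (at y)" and "continuous_on UNIV H"
    using assms(1) unfolding C2_with_hessian_def by blast
  have "\<forall>t. \<exists>y. t > 0 \<longrightarrow> norm (y - p t) \<le> t * (norm a + norm b) \<and>
      \<phi> (p t + t *\<^sub>R a + t *\<^sub>R b) - \<phi> (p t + t *\<^sub>R a) - \<phi> (p t + t *\<^sub>R b) + \<phi> (p t)
        = t\<^sup>2 * ((H y *v b) \<bullet> a)"
    using mixed_second_difference_mean_value[OF d1 d2] by blast
  then obtain Y where Y: "\<And>t. t > 0 \<Longrightarrow> norm (Y t - p t) \<le> t * (norm a + norm b) \<and>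
      \<phi> (p t + t *\<^sub>R a + t *\<^sub>R b) - \<phi> (p t + t *\<^sub>R a) - \<phi> (p t + t *\<^sub>R b) + \<phi> (p t)
        = t\<^sup>2 * ((H (Y t) *v b) \<bullet> a)"
    by metis
  have "((\<lambda>t. Y t - p t) \<longlongrightarrow> 0) (at_right 0)"
  proof (rule Lim_null_comparison)
    show "eventually (\<lambda>t. norm (Y t - p t) \<le> t * (norm a + norm b)) (at_right 0)"
      using Y by (intro eventually_mono[OF eventually_at_right_less]) blast
    show "((\<lambda>t. t * (norm a + norm b)) \<longlongrightarrow> 0) (at_right 0)"
      by (auto intro!: tendsto_eq_intros)
  qed
  from tendsto_add[OF this p] have "(Y \<longlongrightarrow> x) (at_right 0)" by simp
  moreover have "isCont H x"
    using \<open>continuous_on UNIV H\<close> by (simp add: continuous_on_eq_continuous_at)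
  ultimately have "((\<lambda>t. H (Y t)) \<longlongrightarrow> H x) (at_right 0)" by (simp add: isCont_tendsto_compose)
  from tendsto_matrix_vector_mult_inner[OF this] show ?thesis
  proof (rule Lim_transform_eventually)
    show "eventually (\<lambda>t. (H (Y t) *v b) \<bullet> a =
        (\<phi> (p t + t *\<^sub>R a + t *\<^sub>R b) - \<phi> (p t + t *\<^sub>R a) - \<phi> (p t + t *\<^sub>R b) + \<phi> (p t)) / t\<^sup>2)
      (at_right 0)"
      using eventually_at_right_less by (rule eventually_mono) (simp add: Y)
  qed
qed

lemma C2_with_hessian_symmetric:
  assumes "C2_with_hessian \<phi> H"
  shows "transpose (H x) = H x"
proof -
  have "H x $ i $ j = H x $ j $ i" for i j
  proof -
    let ?a = "axis i (1::real)" and ?b = "axis j (1::real)"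
    have lim: "((\<lambda>t. (\<phi> (x + t *\<^sub>R a + t *\<^sub>R b) - \<phi> (x + t *\<^sub>R a) - \<phi> (x + t *\<^sub>R b) + \<phi> x) / t\<^sup>2)
        \<longlongrightarrow> (H x *v b) \<bullet> a) (at_right 0)" for a b
      using C2_mixed_second_difference_tendsto[OF assms tendsto_const] .
    have "(H x *v ?b) \<bullet> ?a = (H x *v ?a) \<bullet> ?b"
      using tendsto_unique[OF trivial_limit_at_right_real lim[of ?a ?b]] lim[of ?b ?a]
      by (simp add: algebra_simps)
    then show ?thesis by (simp add: inner_axis matrix_vector_mult_basis column_def)
  qed
  then show ?thesis by (simp add: vec_eq_iff transpose_def)
qed

lemma C2_with_hessian_uminus:
  assumes "C2_with_hessian \<phi> H"
  shows "C2_with_hessian (\<lambda>y. - \<phi> y) (\<lambda>y. - H y)"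
proof -
  obtain g where "\<And>y. (\<phi> has_derivative (\<lambda>h. g y \<bullet> h)) (at y)"
    and "\<And>y. (g has_derivative (\<lambda>h. H y *v h)) (at y)" and "continuous_on UNIV H"
    using assms unfolding C2_with_hessian_def by blast
  then show ?thesis
    unfolding C2_with_hessian_def
    by (intro exI[of _ "\<lambda>y. - g y"] conjI allI)
       (auto simp: matrix_vector_mult_uminus_left intro!: derivative_eq_intros continuous_on_minus)
qed

definition second_difference_quotient ::
    "('a::real_vector \<Rightarrow> real) \<Rightarrow> 'a \<Rightarrow> 'a \<Rightarrow> real \<Rightarrow> real" where
  "second_difference_quotient w x h t = (w (x + t *\<^sub>R h) + w (x - t *\<^sub>R h) - 2 * w x) / t\<^sup>2"

lemma C2_second_difference_quotient_tendsto:
  assumes "C2_with_hessian \<phi> H"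
  shows "(second_difference_quotient \<phi> x h \<longlongrightarrow> (H x *v h) \<bullet> h) (at_right 0)"
proof -
  \<comment> \<open>the symmetric second difference at x is the mixed one based at x - t h\<close>
  have "((\<lambda>t. x - t *\<^sub>R h) \<longlongrightarrow> x) (at_right 0)" by (auto intro!: tendsto_eq_intros)
  from C2_mixed_second_difference_tendsto[OF assms this, of h h] show ?thesis
    by (simp add: second_difference_quotient_def[abs_def] algebra_simps)
qed

lemma second_difference_quotient_le_if_touching_above:
  fixes w \<phi> :: "'a::real_normed_vector \<Rightarrow> real"
  assumes "eventually (\<lambda>y. w y \<le> \<phi> y) (nhds x)" and "\<phi> x = w x"
  shows "eventually (\<lambda>t. second_difference_quotient w x h t \<le> second_difference_quotient \<phi> x h t)
           (at_right 0)"
proof -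
  have "((\<lambda>t. x + t *\<^sub>R h) \<longlongrightarrow> x) (at_right 0)" "((\<lambda>t. x - t *\<^sub>R h) \<longlongrightarrow> x) (at_right 0)"
    by (auto intro!: tendsto_eq_intros)
  then have "eventually (\<lambda>t. w (x + t *\<^sub>R h) \<le> \<phi> (x + t *\<^sub>R h)) (at_right 0)"
    "eventually (\<lambda>t. w (x - t *\<^sub>R h) \<le> \<phi> (x - t *\<^sub>R h)) (at_right 0)"
    using eventually_compose_filterlim[OF assms(1)] by blast+
  then show ?thesis
    by eventually_elim (simp add: second_difference_quotient_def assms(2) divide_right_mono)
qed

lemma touching_above_second_difference_quotient_limit_le:
  assumes "C2_with_hessian \<phi> H" and "eventually (\<lambda>y. w y \<le> \<phi> y) (nhds x)" and "\<phi> x = w x"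
    and "(second_difference_quotient w x h \<longlongrightarrow> L) (at_right 0)"
  shows "L \<le> (H x *v h) \<bullet> h"
  using trivial_limit_at_right_real C2_second_difference_quotient_tendsto[OF assms(1)] assms(4)
    second_difference_quotient_le_if_touching_above[OF assms(2,3)]
  by (rule tendsto_le)

lemma touching_above_second_difference_quotient_not_at_top:
  assumes "C2_with_hessian \<phi> H" and "eventually (\<lambda>y. w y \<le> \<phi> y) (nhds x)" and "\<phi> x = w x"
  shows "\<not> filterlim (second_difference_quotient w x h) at_top (at_right 0)"
proof
  assume "filterlim (second_difference_quotient w x h) at_top (at_right 0)"
  then have "eventually (\<lambda>t. (H x *v h) \<bullet> h + 1 < second_difference_quotient w x h t) (at_right 0)"
    by (simp add: filterlim_at_top_dense)
  moreover have "eventually (\<lambda>t. second_difference_quotient \<phi> x h t < (H x *v h) \<bullet> h + 1) (at_right 0)"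
    using C2_second_difference_quotient_tendsto[OF assms(1)] by (rule order_tendstoD) simp
  moreover note second_difference_quotient_le_if_touching_above[OF assms(2,3), of h]
  ultimately have "eventually (\<lambda>t. False) (at_right (0::real))" by eventually_elim linarith
  then show False by simp
qed

lemma viscosity_supersolution_if_uminus_subsolution:
  assumes "viscosity_subsolution F (\<lambda>x. - f x) \<Omega> (\<lambda>x. - w x)"
    and odd: "\<And>X. transpose X = X \<Longrightarrow> F (- X) = - F X"
  shows "viscosity_supersolution F f \<Omega> w"
  unfolding viscosity_supersolution_def
proof (intro ballI allI impI)
  fix x \<psi> H
  assume "x \<in> \<Omega>" and "C2_with_hessian \<psi> H \<and> eventually (\<lambda>y. \<psi> y \<le> w y) (nhds x) \<and> \<psi> x = w x"
  then have "C2_with_hessian (\<lambda>y. - \<psi> y) (\<lambda>y. - H y)"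
    and "eventually (\<lambda>y. - w y \<le> - \<psi> y) (nhds x)" and "- \<psi> x = - w x"
    by (auto simp: C2_with_hessian_uminus elim: eventually_mono)
  then have "- f x \<le> F (- H x)"
    using assms(1) \<open>x \<in> \<Omega>\<close> unfolding viscosity_subsolution_def by blast
  moreover have "transpose (H x) = H x"
    using \<open>C2_with_hessian \<psi> H \<and> _\<close> C2_with_hessian_symmetric by blast
  ultimately show "F (H x) \<le> f x" using odd by fastforce
qed

lemma second_difference_quotient_real_direction:
  fixes w :: "real \<Rightarrow> real"
  shows "second_difference_quotient w x h t = h\<^sup>2 * second_difference_quotient w x 1 (\<bar>h\<bar> * t)"
proof (cases "h = 0")
  case False
  have "w (x + t *\<^sub>R h) + w (x - t *\<^sub>R h) = w (x + (\<bar>h\<bar> * t) *\<^sub>R 1) + w (x - (\<bar>h\<bar> * t) *\<^sub>R 1)"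
    by (cases "h \<ge> 0") (simp_all add: mult.commute)
  then show ?thesis
    using False by (simp add: second_difference_quotient_def power_mult_distrib)
qed (simp add: second_difference_quotient_def)

section \<open>The separable functions\<close>

definition vterm :: "bool \<Rightarrow> real \<Rightarrow> real" where
  "vterm p s = (if p then - \<bar>s\<bar> else 1/2 * \<bar>s\<bar> powr (3/2))"

lemma vterm_second_difference_quotient_eq:
  "second_difference_quotient (vterm p) x 1 =
     (\<lambda>t. (vterm p (\<bar>x\<bar> + t) + vterm p (\<bar>x\<bar> - t) - 2 * vterm p \<bar>x\<bar>) / t\<^sup>2)"
proof
  fix t
  have even: "vterm p (- s) = vterm p s" for s by (simp add: vterm_def)
  show "second_difference_quotient (vterm p) x 1 t =
      (vterm p (\<bar>x\<bar> + t) + vterm p (\<bar>x\<bar> - t) - 2 * vterm p \<bar>x\<bar>) / t\<^sup>2"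
  proof (cases "x < 0")
    case True
    then have "\<bar>x\<bar> + t = - (x - t)" "\<bar>x\<bar> - t = - (x + t)" "\<bar>x\<bar> = - x" by auto
    then show ?thesis by (simp only: second_difference_quotient_def even) (simp add: add.commute)
  qed (simp add: second_difference_quotient_def)
qed

lemma vterm_kink_second_difference_quotient_tendsto:
  assumes "x \<noteq> 0"
  shows "(second_difference_quotient (vterm True) x 1 \<longlongrightarrow> 0) (at_right 0)"
proof -
  have "\<bar>x\<bar> > 0" using assms by simp
  then have "((\<lambda>t. (- \<bar>\<bar>x\<bar> + t\<bar> + - \<bar>\<bar>x\<bar> - t\<bar> - 2 * - \<bar>\<bar>x\<bar>\<bar>) / t\<^sup>2) \<longlongrightarrow> 0) (at_right 0)"
    by real_asymp
  then show ?thesis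
    by (simp add: vterm_second_difference_quotient_eq vterm_def)
qed

lemma vterm_cusp_second_difference_quotient_tendsto:
  assumes "x \<noteq> 0"
  shows "(second_difference_quotient (vterm False) x 1 \<longlongrightarrow> 3/8 * \<bar>x\<bar> powr (-1/2)) (at_right 0)"
proof -
  have "\<bar>x\<bar> > 0" using assms by simp
  have "\<bar>x\<bar> powr (3/2) / \<bar>x\<bar>\<^sup>2 = \<bar>x\<bar> powr (-1/2)"
    using powr_diff[of "\<bar>x\<bar>" "3/2" 2] \<open>\<bar>x\<bar> > 0\<close> by simp
  moreover have "((\<lambda>t. (1/2 * \<bar>\<bar>x\<bar> + t\<bar> powr (3/2) + 1/2 * \<bar>\<bar>x\<bar> - t\<bar> powr (3/2)
                    - 2 * (1/2 * \<bar>\<bar>x\<bar>\<bar> powr (3/2))) / t\<^sup>2)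
             \<longlongrightarrow> 3/8 * (\<bar>x\<bar> powr (3/2) / \<bar>x\<bar>\<^sup>2)) (at_right 0)"
    using \<open>\<bar>x\<bar> > 0\<close> by (real_asymp simp: field_simps power2_eq_square)
  ultimately have "((\<lambda>t. (1/2 * \<bar>\<bar>x\<bar> + t\<bar> powr (3/2) + 1/2 * \<bar>\<bar>x\<bar> - t\<bar> powr (3/2)
                    - 2 * (1/2 * \<bar>\<bar>x\<bar>\<bar> powr (3/2))) / t\<^sup>2)
             \<longlongrightarrow> 3/8 * \<bar>x\<bar> powr (-1/2)) (at_right 0)"
    by simp
  then show ?thesis by (simp add: vterm_second_difference_quotient_eq vterm_def)
qed

lemma vterm_cusp_second_difference_quotient_at_0:
  "filterlim (second_difference_quotient (vterm False) 0 1) at_top (at_right 0)"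
proof -
  have "filterlim (\<lambda>t::real. (1/2 * \<bar>t\<bar> powr (3/2) + 1/2 * \<bar>- t\<bar> powr (3/2)) / t\<^sup>2) at_top (at_right 0)"
    by real_asymp
  then show ?thesis by (simp add: vterm_second_difference_quotient_eq vterm_def)
qed

lemma vterm_second_difference_quotient_tendsto:
  assumes "x \<noteq> 0 \<or> h = 0"
  shows "(second_difference_quotient (vterm p) x h \<longlongrightarrow> (if p then 0 else 3/8 * \<bar>x\<bar> powr (-1/2)) * h\<^sup>2)
           (at_right 0)"
proof (cases "h = 0")
  case False
  then have "x \<noteq> 0" using assms by simp
  have "filterlim (\<lambda>t. \<bar>h\<bar> * t) (at_right 0) (at_right 0)"
    using False by (auto simp: filterlim_at intro!: tendsto_eq_intros eventually_mono[OF eventually_at_right_less])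
  moreover have "(second_difference_quotient (vterm p) x 1 \<longlongrightarrow> (if p then 0 else 3/8 * \<bar>x\<bar> powr (-1/2)))
      (at_right 0)"
    using vterm_kink_second_difference_quotient_tendsto[OF \<open>x \<noteq> 0\<close>]
      vterm_cusp_second_difference_quotient_tendsto[OF \<open>x \<noteq> 0\<close>] by simp
  ultimately have "((\<lambda>t. second_difference_quotient (vterm p) x 1 (\<bar>h\<bar> * t))
      \<longlongrightarrow> (if p then 0 else 3/8 * \<bar>x\<bar> powr (-1/2))) (at_right 0)"
    by (rule filterlim_compose[rotated])
  from tendsto_mult_left[OF this, of "h\<^sup>2"] show ?thesis
    by (simp add: second_difference_quotient_real_direction[of _ x h, abs_def] mult.commute)
qed (simp add: second_difference_quotient_def[abs_def])

definition vsep :: "('n::finite \<Rightarrow> bool) \<Rightarrow> real^'n \<Rightarrow> real" where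
  "vsep P y = 1/4 + (\<Sum>j\<in>UNIV. vterm (P j) (y $ j))"

lemma second_difference_quotient_vsep:
  "second_difference_quotient (vsep P) x h t =
     (\<Sum>j\<in>UNIV. second_difference_quotient (vterm (P j)) (x $ j) (h $ j) t)"
proof -
  have "vsep P (x + t *\<^sub>R h) + vsep P (x - t *\<^sub>R h) - 2 * vsep P x =
      (\<Sum>j\<in>UNIV. vterm (P j) (x $ j + t * h $ j) + vterm (P j) (x $ j - t * h $ j) - 2 * vterm (P j) (x $ j))"
    by (simp add: vsep_def sum.distrib sum_subtractf sum_distrib_left)
  then show ?thesis by (simp add: second_difference_quotient_def sum_divide_distrib)
qed

lemma vsep_touching_above_cusp_coordinate_nonzero:
  assumes "C2_with_hessian \<phi> H" and "eventually (\<lambda>y. vsep P y \<le> \<phi> y) (nhds x)" and "\<phi> x = vsep P x"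
    and "\<not> P j"
  shows "x $ j \<noteq> 0"
proof
  assume "x $ j = 0"
  have "second_difference_quotient (vsep P) x (axis j 1) = second_difference_quotient (vterm False) 0 1"
  proof
    fix t
    have "second_difference_quotient (vterm (P i)) (x $ i) (axis j 1 $ i) t
        = (if i = j then second_difference_quotient (vterm False) 0 1 t else 0)" for i
      using \<open>x $ j = 0\<close> \<open>\<not> P j\<close> by (simp add: axis_def second_difference_quotient_def)
    then show "second_difference_quotient (vsep P) x (axis j 1) t
        = second_difference_quotient (vterm False) 0 1 t"
      by (simp add: second_difference_quotient_vsep)
  qed
  then show False
    using vterm_cusp_second_difference_quotient_at_0
      touching_above_second_difference_quotient_not_at_top[OF assms(1-3)] by metis
qed

lemma vsep_touching_above_hessian_lower_bound:
  assumes "C2_with_hessian \<phi> H" and "eventually (\<lambda>y. vsep P y \<le> \<phi> y) (nhds x)" and "\<phi> x = vsep P x"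
    and "\<And>j. P j \<Longrightarrow> x $ j = 0 \<Longrightarrow> h $ j = 0"
  shows "(\<Sum>j\<in>UNIV. (if P j then 0 else 3/8 * \<bar>x $ j\<bar> powr (-1/2)) * (h $ j)\<^sup>2) \<le> h \<bullet> (H x *v h)"
proof -
  have "x $ j \<noteq> 0 \<or> h $ j = 0" for j
    using assms(4) vsep_touching_above_cusp_coordinate_nonzero[OF assms(1-3)] by blast
  then have "(second_difference_quotient (vsep P) x h
      \<longlongrightarrow> (\<Sum>j\<in>UNIV. (if P j then 0 else 3/8 * \<bar>x $ j\<bar> powr (-1/2)) * (h $ j)\<^sup>2)) (at_right 0)"
    unfolding second_difference_quotient_vsep[abs_def]
    by (intro tendsto_sum vterm_second_difference_quotient_tendsto)
  from touching_above_second_difference_quotient_limit_le[OF assms(1-3) this] show ?thesis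
    by (simp add: inner_commute)
qed

definition arctan_cusp :: "real \<Rightarrow> real" where
  "arctan_cusp s = (if s = 0 then pi / 2 else arctan (3/8 * \<bar>s\<bar> powr (-1/2)))"

lemma arctan_cusp_nonneg: "0 \<le> arctan_cusp s"
  by (simp add: arctan_cusp_def)

lemma tendsto_arctan_cusp:
  "((\<lambda>t. arctan (3/8 * \<bar>s + t * (if s = 0 then 1 else 0)\<bar> powr (-1/2))) \<longlongrightarrow> arctan_cusp s) (at_right 0)"
proof (cases "s = 0")
  case True
  have "((\<lambda>t::real. arctan (3/8 * t powr (-1/2))) \<longlongrightarrow> pi / 2) (at_right 0)" by real_asymp
  then show ?thesis
    using True by (simp add: arctan_cusp_def)
      (rule Lim_transform_eventually, auto intro: eventually_mono[OF eventually_at_right_less])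
qed (simp add: arctan_cusp_def)

lemma continuous_eq_arctan_cusp_sums:
  fixes f :: "real^'n \<Rightarrow> real" and P :: "'n \<Rightarrow> bool"
  assumes "continuous_on UNIV f"
    and "\<And>x. \<forall>i. x $ i \<noteq> 0 \<Longrightarrow>
           f x = - (\<Sum>i\<in>{i. P i}. arctan ((3/8) * \<bar>x $ i\<bar> powr (-1/2)))
                 + (\<Sum>i\<in>{i. \<not> P i}. arctan ((3/8) * \<bar>x $ i\<bar> powr (-1/2)))"
  shows "f x = - (\<Sum>i\<in>{i. P i}. arctan_cusp (x $ i)) + (\<Sum>i\<in>{i. \<not> P i}. arctan_cusp (x $ i))"
proof -
  define e :: "real^'n" where "e = (\<chi> i. if x $ i = 0 then 1 else 0)"
  have "isCont f x" using assms(1) by (simp add: continuous_on_eq_continuous_at)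
  moreover have "((\<lambda>t. x + t *\<^sub>R e) \<longlongrightarrow> x) (at_right 0)" by (auto intro!: tendsto_eq_intros)
  ultimately have "((\<lambda>t. f (x + t *\<^sub>R e)) \<longlongrightarrow> f x) (at_right 0)"
    by (rule isCont_tendsto_compose)
  moreover have "((\<lambda>t. f (x + t *\<^sub>R e)) \<longlongrightarrow>
      - (\<Sum>i\<in>{i. P i}. arctan_cusp (x $ i)) + (\<Sum>i\<in>{i. \<not> P i}. arctan_cusp (x $ i))) (at_right 0)"
  proof (rule Lim_transform_eventually)
    have "((\<lambda>t. arctan (3/8 * \<bar>(x + t *\<^sub>R e) $ i\<bar> powr (-1/2))) \<longlongrightarrow> arctan_cusp (x $ i))
        (at_right 0)" for i
      using tendsto_arctan_cusp[of "x $ i"] by (simp add: e_def)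
    then show "((\<lambda>t. - (\<Sum>i\<in>{i. P i}. arctan (3/8 * \<bar>(x + t *\<^sub>R e) $ i\<bar> powr (-1/2)))
                 + (\<Sum>i\<in>{i. \<not> P i}. arctan (3/8 * \<bar>(x + t *\<^sub>R e) $ i\<bar> powr (-1/2))))
        \<longlongrightarrow> - (\<Sum>i\<in>{i. P i}. arctan_cusp (x $ i)) + (\<Sum>i\<in>{i. \<not> P i}. arctan_cusp (x $ i))) (at_right 0)"
      by (intro tendsto_add tendsto_minus tendsto_sum)
    have "\<forall>i. (x + t *\<^sub>R e) $ i \<noteq> 0" if "0 < t" "t < 1" for t
      using that by (auto simp: e_def)
    then show "eventually (\<lambda>t. - (\<Sum>i\<in>{i. P i}. arctan (3/8 * \<bar>(x + t *\<^sub>R e) $ i\<bar> powr (-1/2)))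
                 + (\<Sum>i\<in>{i. \<not> P i}. arctan (3/8 * \<bar>(x + t *\<^sub>R e) $ i\<bar> powr (-1/2)))
           = f (x + t *\<^sub>R e)) (at_right 0)"
      using assms(2) by (auto simp: eventually_at_right_field intro!: exI[of _ 1])
  qed
  ultimately show ?thesis using tendsto_unique[OF trivial_limit_at_right_real] by blast
qed

theorem vsep_viscosity_subsolution:
  fixes f :: "real^'n \<Rightarrow> real" and P :: "'n \<Rightarrow> bool"
  assumes "continuous_on UNIV f"
    and "\<And>x. \<forall>i. x $ i \<noteq> 0 \<Longrightarrow>
           f x = - (\<Sum>i\<in>{i. P i}. arctan ((3/8) * \<bar>x $ i\<bar> powr (-1/2)))
                 + (\<Sum>i\<in>{i. \<not> P i}. arctan ((3/8) * \<bar>x $ i\<bar> powr (-1/2)))"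
  shows "viscosity_subsolution Farctan f UNIV (vsep P)"
  unfolding viscosity_subsolution_def
proof (intro ballI allI impI)
  fix x \<phi> H
  assume "C2_with_hessian \<phi> H \<and> eventually (\<lambda>y. vsep P y \<le> \<phi> y) (nhds x) \<and> \<phi> x = vsep P x"
  then have touch: "C2_with_hessian \<phi> H" "eventually (\<lambda>y. vsep P y \<le> \<phi> y) (nhds x)" "\<phi> x = vsep P x"
    by auto
  define S where "S = {j. P j \<and> x $ j = 0}"
  define d where "d j = (if P j then 0 else 3/8 * \<bar>x $ j\<bar> powr (-1/2))" for j
  have "(\<Sum>i\<in>-S. d i * (h $ i)\<^sup>2) \<le> h \<bullet> (H x *v h)" if "\<forall>i\<in>S. h $ i = 0" for h
  proof -
    have "(\<Sum>i\<in>-S. d i * (h $ i)\<^sup>2) = (\<Sum>i\<in>UNIV. d i * (h $ i)\<^sup>2)"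
      using that by (intro sum.mono_neutral_left) auto
    also have "\<dots> \<le> h \<bullet> (H x *v h)"
      using that unfolding d_def by (intro vsep_touching_above_hessian_lower_bound[OF touch]) (simp add: S_def)
    finally show ?thesis .
  qed
  with C2_with_hessian_symmetric[OF touch(1)]
  have "(\<Sum>i\<in>-S. arctan (d i)) - real (card S) * (pi / 2) \<le> Farctan (H x)"
    by (rule Farctan_lower_bound)
  moreover have "real (card S) * (pi / 2) \<le> (\<Sum>i\<in>{i. P i}. arctan_cusp (x $ i))"
  proof -
    have "real (card S) * (pi / 2) = (\<Sum>i\<in>S. arctan_cusp (x $ i))" by (simp add: S_def arctan_cusp_def)
    also have "\<dots> \<le> (\<Sum>i\<in>{i. P i}. arctan_cusp (x $ i))"
      by (intro sum_mono2) (auto simp: S_def arctan_cusp_nonneg)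
    finally show ?thesis .
  qed
  moreover have "(\<Sum>i\<in>{i. \<not> P i}. arctan_cusp (x $ i)) = (\<Sum>i\<in>-S. arctan (d i))"
    using vsep_touching_above_cusp_coordinate_nonzero[OF touch]
    by (intro sum.mono_neutral_cong_left) (auto simp: S_def d_def arctan_cusp_def)
  moreover have "f x = - (\<Sum>i\<in>{i. P i}. arctan_cusp (x $ i)) + (\<Sum>i\<in>{i. \<not> P i}. arctan_cusp (x $ i))"
    using assms by (rule continuous_eq_arctan_cusp_sums)
  ultimately show "f x \<le> Farctan (H x)" by linarith
qed

section \<open>The functions v_k and u_k\<close>

lemma idx_strict_mono: "i < j \<Longrightarrow> idx i < idx j"
  for i j :: "'n::{finite,wellorder}"
  unfolding idx_def by (rule psubset_card_mono) auto

lemma inj_idx: "inj (idx :: 'n::{finite,wellorder} \<Rightarrow> nat)"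
  by (metis injI idx_strict_mono linorder_cases less_irrefl)

lemma idx_less_card: "idx (i :: 'n::{finite,wellorder}) < CARD('n)"
  unfolding idx_def by (rule psubset_card_mono) auto

lemma range_idx: "range (idx :: 'n::{finite,wellorder} \<Rightarrow> nat) = {..<CARD('n)}"
proof -
  have "range (idx :: 'n \<Rightarrow> nat) \<subseteq> {..<CARD('n)}" using idx_less_card by auto
  moreover have "card (range (idx :: 'n \<Rightarrow> nat)) = CARD('n)" using card_image[OF inj_idx] by simp
  ultimately show ?thesis by (intro card_subset_eq) auto
qed

definition mirror :: "'n::{finite,wellorder} \<Rightarrow> 'n" where
  "mirror i = inv idx (CARD('n) - 1 - idx i)"

lemma idx_mirror: "idx (mirror i) = CARD('n) - 1 - idx (i :: 'n::{finite,wellorder})"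
proof -
  have "CARD('n) - 1 - idx i \<in> range (idx :: 'n \<Rightarrow> nat)" by (simp add: range_idx)
  then show ?thesis by (simp add: mirror_def f_inv_into_f)
qed

lemma mirror_mirror: "mirror (mirror i) = i"
  using idx_mirror[of "mirror i"] idx_mirror[of i] idx_less_card[of i] by (simp add: injD[OF inj_idx])

lemma exchange_mult_vec: "(exchange *v x) $ i = x $ mirror i"
  for x :: "real^'n::{finite,wellorder}"
proof -
  have "idx i + idx j = CARD('n) - 1 \<longleftrightarrow> j = mirror i" for j :: 'n
    using idx_mirror[of i] idx_less_card[of i] idx_less_card[of j] inj_eq[OF inj_idx, of j "mirror i"]
    by auto
  then show ?thesis
    by (simp add: exchange_def matrix_vector_mult_def if_distrib[where f = "\<lambda>a. a * b" for b] cong: if_cong)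
qed

lemma vfun_eq_vsep: "vfun k y = vsep (\<lambda>i. idx i < k) y"
  for y :: "real^'n::{finite,wellorder}"
proof -
  have "(\<Sum>j\<in>UNIV. vterm (idx j < k) (y $ j))
      = (\<Sum>j\<in>{j. idx j < k}. - \<bar>y $ j\<bar>) + (\<Sum>j\<in>{j. k \<le> idx j}. 1/2 * \<bar>y $ j\<bar> powr (3/2))"
    unfolding vterm_def by (subst sum.If_cases) (simp_all add: Compl_eq not_less)
  then show ?thesis by (simp add: vfun_def vsep_def sum_negf)
qed

lemma uminus_ufun_eq_vsep:
  fixes x :: "real^'n::{finite,wellorder}"
  assumes "k \<le> CARD('n)"
  shows "- ufun k x = vsep (\<lambda>i. k \<le> idx i) x"
proof -
  have "bij (mirror :: 'n \<Rightarrow> 'n)" by (metis bijI' mirror_mirror)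
  have "- ufun k x = 1/4 + (\<Sum>j\<in>UNIV. vterm (idx j < CARD('n) - k) (x $ mirror j))"
    by (simp add: ufun_def vfun_eq_vsep vsep_def exchange_mult_vec)
  also have "(\<Sum>j\<in>UNIV. vterm (idx j < CARD('n) - k) (x $ mirror j))
      = (\<Sum>i\<in>UNIV. vterm (idx (mirror i) < CARD('n) - k) (x $ i))"
    using sum.reindex_bij_betw[OF \<open>bij mirror\<close>, of "\<lambda>i. vterm (idx (mirror i) < CARD('n) - k) (x $ i)"]
    by (simp add: mirror_mirror)
  also have "\<dots> = (\<Sum>i\<in>UNIV. vterm (k \<le> idx i) (x $ i))"
  proof (rule sum.cong)
    fix i :: 'n
    have "idx (mirror i) < CARD('n) - k \<longleftrightarrow> k \<le> idx i"
      using assms idx_less_card[of i] by (auto simp: idx_mirror)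
    then show "vterm (idx (mirror i) < CARD('n) - k) (x $ i) = vterm (k \<le> idx i) (x $ i)" by simp
  qed simp
  finally show ?thesis by (simp add: vsep_def)
qed

theorem mainTheorem1:
  fixes k :: nat and f :: "real^'n::{finite,wellorder} \<Rightarrow> real"
  assumes "k \<le> CARD('n)"
    and "continuous_on UNIV f"
    and "\<And>x. (\<forall>i. x $ i \<noteq> 0) \<Longrightarrow>
           f x = - (\<Sum>i\<in>{i. idx i < k}. arctan ((3/8) * \<bar>x $ i\<bar> powr (-1/2)))
                 + (\<Sum>i\<in>{i. k \<le> idx i}. arctan ((3/8) * \<bar>x $ i\<bar> powr (-1/2)))"
  shows "viscosity_subsolution Farctan f UNIV (vfun k)
       \<and> viscosity_supersolution Farctan f UNIV (ufun k)"
proof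
  show "viscosity_subsolution Farctan f UNIV (vfun k)"
    unfolding vfun_eq_vsep[abs_def] using assms(2)
    by (rule vsep_viscosity_subsolution) (simp add: assms(3) not_less)
  have "viscosity_subsolution Farctan (\<lambda>x. - f x) UNIV (\<lambda>x. - ufun k x)"
    unfolding uminus_ufun_eq_vsep[OF assms(1)] using assms(2)
    by (rule vsep_viscosity_subsolution[OF continuous_on_minus]) (simp add: assms(3) not_le)
  then show "viscosity_supersolution Farctan f UNIV (ufun k)"
    by (rule viscosity_supersolution_if_uminus_subsolution) (rule Farctan_uminus)
qed

end
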